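(* Let $m,k$ be integers with $1\le k\le m$. Let $p$ be a real polynomial of degree at most $2m-k-1$ and $q$ a real polynomial of degree at most $k-1$. Let $t_1,\dots,t_m$ be distinct numbers in $(0,1)$ such that for all $i=1,\dots,m$, $$p^{\mathrm{even}}(t_i)+q^{\mathrm{odd}}(t_i)(1-t_i^2)^{m-k}=0\quad\text{and}\quad p^{\mathrm{odd}}(t_i)+q^{\mathrm{even}}(t_i)(1-t_i^2)^{m-k}=0.$$ Then $p\equiv0$ and $q\equiv0$.
   Context: For a polynomial $p(t)=\sum_{j=0}^N c_jt^j$, $p^{\mathrm{even}}(t)=\sum_{2j\le N}c_{2j}t^{2j}$ and $p^{\mathrm{odd}}(t)=\sum_{1\le 2j-1\le N}c_{2j-1}t^{2j-1}$. *)

theory Defs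
  imports "HOL-Computational_Algebra.Polynomial"
begin

definition poly_even :: "'a::comm_ring_1 poly \<Rightarrow> 'a poly" where
  "poly_even p = (\<Sum>j\<le>degree p. if even j then monom (coeff p j) j else 0)"

definition poly_odd :: "'a::comm_ring_1 poly \<Rightarrow> 'a poly" where
  "poly_odd p = (\<Sum>j\<le>degree p. if odd j then monom (coeff p j) j else 0)"

end

theory Submission
  imports Defs
begin

text \<open>Adding and subtracting the two conditions shows that \<open>f = p + (1 - x\<^sup>2)\<^sup>n q\<close> vanishes at
  the \<open>t\<^sub>i\<close> and \<open>g = p - (1 - x\<^sup>2)\<^sup>n q\<close> at the \<open>-t\<^sub>i\<close>, where \<open>n = m - k\<close>. The Cayley
  substitution \<open>x = (1 - y)/(1 + y)\<close>, homogenised to degree \<open>N = 2m - k - 1\<close>, moves these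
  roots to \<open>m\<close> points of \<open>(0, 1)\<close> and \<open>m\<close> points of \<open>(1, \<infinity>)\<close> and turns \<open>(1 - x\<^sup>2)\<^sup>n\<close> into a
  multiple of \<open>y\<^sup>n\<close>, so the transforms \<open>F\<close>, \<open>G\<close> of \<open>f\<close>, \<open>g\<close> differ only in the \<open>k\<close>
  coefficients of degrees \<open>n, \<dots>, n + k - 1\<close>. The operator \<open>\<Prod>\<^sub>c (y d/dy - c)\<close> over these
  degrees kills exactly those monomials, so it maps \<open>F\<close> and \<open>G\<close> to one polynomial \<open>P\<close>; since
  \<open>(y d/dy - c) H = y^(c+1) (H / y^c)'\<close>, Rolle's theorem shows that each factor loses at most
  one positive root, so \<open>P\<close> keeps \<open>n\<close> roots in each of \<open>(0, 1)\<close> and \<open>(1, \<infinity>)\<close>. But \<open>P\<close> has at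
  most \<open>2n\<close> monomials, and by the same Rolle argument a polynomial with \<open>s\<close> monomials has fewer
  than \<open>s\<close> positive roots. Hence \<open>P = 0\<close>; then \<open>F\<close> and \<open>G\<close> have only \<open>k\<close> monomials but
  \<open>m \<ge> k\<close> positive roots, so they vanish, and with them \<open>f\<close>, \<open>g\<close>, \<open>p\<close> and \<open>q\<close>.\<close>

lemma poly_even_add_poly_odd: "poly_even p + poly_odd p = p"
  unfolding poly_even_def poly_odd_def sum.distrib[symmetric]
  by (subst (3) poly_as_sum_of_monoms[symmetric]) (auto intro!: sum.cong)

lemma poly_poly_even_minus: "poly (poly_even p) (- x) = poly (poly_even p) x"
  by (auto simp: poly_even_def poly_sum poly_monom if_distrib intro!: sum.cong)

lemma poly_poly_odd_minus: "poly (poly_odd p) (- x) = - poly (poly_odd p) x"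
  by (auto simp: poly_odd_def poly_sum poly_monom if_distrib sum_negf[symmetric] intro!: sum.cong)

lemma poly_eq_0_if_even_odd_eq_0:
  fixes p q :: "'a::comm_ring_1 poly"
  assumes "poly (poly_even p) x + poly (poly_odd q) x * c = 0"
    and "poly (poly_odd p) x + poly (poly_even q) x * c = 0"
  shows "poly p x + poly q x * c = 0" and "poly p (- x) - poly q (- x) * c = 0"
proof -
  have p: "poly p y = poly (poly_even p) y + poly (poly_odd p) y"
   and q: "poly q y = poly (poly_even q) y + poly (poly_odd q) y" for y
    by (metis poly_add poly_even_add_poly_odd)+
  show "poly p x + poly q x * c = 0" "poly p (- x) - poly q (- x) * c = 0"
    using arg_cong2[OF assms, of "(+)"] arg_cong2[OF assms, of "(-)"]
    by (simp_all add: p q poly_poly_even_minus poly_poly_odd_minus algebra_simps)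
qed

definition has_distinct_roots :: "'a::comm_ring_1 poly \<Rightarrow> 'a set \<Rightarrow> nat \<Rightarrow> bool" where
  "has_distinct_roots H I r \<longleftrightarrow> (\<exists>R. finite R \<and> card R = r \<and> R \<subseteq> I \<and> (\<forall>x\<in>R. poly H x = 0))"

lemma has_distinct_roots_mono:
  assumes "has_distinct_roots H I r" "I \<subseteq> J" "s \<le> r"
  shows "has_distinct_roots H J s"
proof -
  obtain R where R: "finite R" "card R = r" "R \<subseteq> I" "\<forall>x\<in>R. poly H x = 0"
    using assms(1) unfolding has_distinct_roots_def by blast
  obtain R' where R': "R' \<subseteq> R" "card R' = s"
    using obtain_subset_with_card_n R(2) assms(3) by metis
  have "finite R'" using R(1) R'(1) by (rule finite_subset[rotated])
  then show ?thesis
    unfolding has_distinct_roots_def using R R' assms(2) by blast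
qed

lemma has_distinct_roots_Un:
  assumes "has_distinct_roots H I r" "has_distinct_roots H J s" "I \<inter> J = {}"
  shows "has_distinct_roots H (I \<union> J) (r + s)"
proof -
  obtain R S where R: "finite R" "card R = r" "R \<subseteq> I" "\<forall>x\<in>R. poly H x = 0"
    and S: "finite S" "card S = s" "S \<subseteq> J" "\<forall>x\<in>S. poly H x = 0"
    using assms(1,2) unfolding has_distinct_roots_def by blast
  have "card (R \<union> S) = r + s"
    using R S assms(3) by (subst card_Un_disjoint) auto
  then show ?thesis
    unfolding has_distinct_roots_def using R S by (intro exI[of _ "R \<union> S"]) auto
qed

lemma has_distinct_roots_image:
  assumes "finite A" "inj_on \<phi> A" "\<phi> ` A \<subseteq> I" "\<And>a. a \<in> A \<Longrightarrow> poly H (\<phi> a) = 0"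
  shows "has_distinct_roots H I (card A)"
  unfolding has_distinct_roots_def using assms
  by (intro exI[of _ "\<phi> ` A"]) (simp add: card_image)

lemma Rolle_card:
  fixes f f' :: "real \<Rightarrow> real"
  assumes "finite R" "card R = Suc r" "\<forall>x\<in>R. f x = 0"
    and "\<And>x. Min R \<le> x \<Longrightarrow> x \<le> Max R \<Longrightarrow> (f has_real_derivative f' x) (at x)"
  shows "\<exists>R'. finite R' \<and> card R' = r \<and> R' \<subseteq> {Min R<..<Max R} \<and> (\<forall>x\<in>R'. f' x = 0)"
  using assms
proof (induction r arbitrary: R)
  case 0
  show ?case by (intro exI[of _ "{}"]) simp
next
  case (Suc r)
  define M where "M = Max R"
  define R0 where "R0 = R - {M}"
  have "R \<noteq> {}" using Suc.prems(2) by auto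
  then have "M \<in> R" using Suc.prems(1) by (simp add: M_def)
  then have R0: "finite R0" "card R0 = Suc r" "R0 \<subseteq> R"
    using Suc.prems(1,2) by (auto simp: R0_def)
  then have "R0 \<noteq> {}" by auto
  then have "Max R0 \<in> R0" using R0(1) by simp
  then have "Max R0 \<in> R" "Max R0 < M"
    using Suc.prems(1) by (auto simp: R0_def M_def less_le)
  have "Min R \<le> Min R0"
    using Min_antimono[OF R0(3) \<open>R0 \<noteq> {}\<close> Suc.prems(1)] .
  have "Min R0 \<le> Max R0"
    using Min_in[OF R0(1) \<open>R0 \<noteq> {}\<close>] Max_ge[OF R0(1)] by blast
  have der: "(f has_real_derivative f' x) (at x)" if "Min R0 \<le> x" "x \<le> M" for x
    using Suc.prems(4) that \<open>Min R \<le> Min R0\<close> by (simp add: M_def)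
  have "\<forall>x\<in>R0. f x = 0" using Suc.prems(3) R0(3) by blast
  then obtain R0' where R0': "finite R0'" "card R0' = r" "R0' \<subseteq> {Min R0<..<Max R0}"
    "\<forall>x\<in>R0'. f' x = 0"
    using Suc.IH[OF R0(1,2)] der \<open>Max R0 < M\<close> by fastforce
  have "\<exists>z. Max R0 < z \<and> z < M \<and> DERIV f z :> 0"
  proof (rule Rolle[OF \<open>Max R0 < M\<close>])
    show "f (Max R0) = f M" using Suc.prems(3) \<open>M \<in> R\<close> \<open>Max R0 \<in> R\<close> by simp
    show "continuous_on {Max R0..M} f"
    proof (intro continuous_at_imp_continuous_on ballI)
      fix x assume "x \<in> {Max R0..M}"
      then have "(f has_real_derivative f' x) (at x)"
        using der \<open>Min R0 \<le> Max R0\<close> by simp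
      then show "isCont f x" by (rule DERIV_isCont)
    qed
    show "f differentiable (at x)" if "Max R0 < x" "x < M" for x
      using der[of x] that \<open>Min R0 \<le> Max R0\<close> real_differentiable_def by auto
  qed
  then obtain z where z: "Max R0 < z" "z < M" "DERIV f z :> 0" by blast
  have "f' z = 0"
    using DERIV_unique[OF der z(3)] z \<open>Min R0 \<le> Max R0\<close> by simp
  moreover have "z \<notin> R0'" using R0'(3) z(1) by auto
  moreover have "insert z R0' \<subseteq> {Min R<..<Max R}"
    using R0'(3) z \<open>Min R \<le> Min R0\<close> \<open>Min R0 \<le> Max R0\<close> by (auto simp: M_def)
  ultimately show ?case
    using R0' by (intro exI[of _ "insert z R0'"]) simp
qed

definition euler_op :: "nat \<Rightarrow> 'a::idom poly \<Rightarrow> 'a poly" where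
  "euler_op c H = pCons 0 (pderiv H) - smult (of_nat c) H"

lemma coeff_euler_op: "coeff (euler_op c H) e = (of_nat e - of_nat c) * coeff H e"
  by (cases e) (auto simp: euler_op_def coeff_pderiv algebra_simps)

lemma DERIV_poly_divide_power:
  fixes H :: "real poly"
  assumes "y \<noteq> 0"
  shows "((\<lambda>y. poly H y / y ^ c) has_real_derivative poly (euler_op c H) y / y ^ Suc c) (at y)"
proof -
  have "((\<lambda>y. poly H y / y ^ c) has_real_derivative
      (poly (pderiv H) y * y ^ c - poly H y * (real c * y ^ (c - 1))) / (y ^ c * y ^ c)) (at y)"
    by (rule DERIV_divide) (use assms in \<open>auto intro: DERIV_pow\<close>)
  moreover have "(poly (pderiv H) y * y ^ c - poly H y * (real c * y ^ (c - 1))) / (y ^ c * y ^ c)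
      = poly (euler_op c H) y / y ^ Suc c"
    using assms by (cases c) (simp_all add: euler_op_def field_simps)
  ultimately show ?thesis by simp
qed

lemma has_distinct_roots_euler_op:
  fixes H :: "real poly"
  assumes "connected I" "0 \<notin> I" "has_distinct_roots H I (Suc r)"
  shows "has_distinct_roots (euler_op c H) I r"
proof -
  obtain R where R: "finite R" "card R = Suc r" "R \<subseteq> I" "\<forall>x\<in>R. poly H x = 0"
    using assms(3) unfolding has_distinct_roots_def by blast
  then have "R \<noteq> {}" by auto
  then have hull: "{Min R..Max R} \<subseteq> I"
    using Min_in[OF R(1)] Max_in[OF R(1)] R(3) by (intro connected_contains_Icc[OF assms(1)]) auto
  obtain R' where R': "finite R'" "card R' = r" "R' \<subseteq> {Min R<..<Max R}"
    "\<forall>x\<in>R'. poly (euler_op c H) x / x ^ Suc c = 0"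
    using Rolle_card[OF R(1,2), of "\<lambda>y. poly H y / y ^ c"] R(4) hull assms(2)
    by (force intro: DERIV_poly_divide_power)
  have "R' \<subseteq> I"
    using R'(3) hull greaterThanLessThan_subseteq_atLeastAtMost_iff by blast
  then have "\<forall>x\<in>R'. poly (euler_op c H) x = 0" using R'(4) assms(2) by fastforce
  then show ?thesis unfolding has_distinct_roots_def using R' \<open>R' \<subseteq> I\<close> by blast
qed

lemma coeff_foldr_euler_op:
  "coeff (foldr euler_op cs H) e = (\<Prod>c\<leftarrow>cs. of_nat e - of_nat c) * coeff H e"
  by (induction cs) (simp_all add: coeff_euler_op)

lemma has_distinct_roots_foldr_euler_op:
  fixes H :: "real poly"
  assumes "connected I" "0 \<notin> I" "has_distinct_roots H I (r + length cs)"
  shows "has_distinct_roots (foldr euler_op cs H) I r"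
  using assms(3)
  by (induction cs arbitrary: r) (simp_all add: has_distinct_roots_euler_op[OF assms(1,2)])

lemma poly_eq_0_if_support_le_positive_roots:
  fixes H :: "real poly"
  assumes "finite S" "\<forall>e. e \<notin> S \<longrightarrow> coeff H e = 0" "has_distinct_roots H {0<..} (card S)"
  shows "H = 0"
  using assms
proof (induction S arbitrary: H rule: finite_induct)
  case empty
  then show ?case by (simp add: poly_eq_iff)
next
  case (insert c S)
  have "has_distinct_roots (euler_op c H) {0<..} (card S)"
    using insert.prems(2) insert.hyps by (intro has_distinct_roots_euler_op) simp_all
  moreover have "\<forall>e. e \<notin> S \<longrightarrow> coeff (euler_op c H) e = 0"
    using insert.prems(1) by (auto simp: coeff_euler_op)
  ultimately have "euler_op c H = 0" using insert.IH by blast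
  then have "coeff H e = 0" if "e \<noteq> c" for e
    using coeff_euler_op[of c H e] that by simp
  then have monom: "H = monom (coeff H c) c" by (intro poly_eqI) simp
  have "has_distinct_roots H {0<..} 1"
    using insert.prems(2) by (rule has_distinct_roots_mono) (simp_all add: insert.hyps)
  then obtain y where "y > 0" "poly H y = 0"
    unfolding has_distinct_roots_def by (auto simp: card_1_singleton_iff)
  then have "coeff H c = 0" by (subst (asm) monom) (simp add: poly_monom)
  then show ?case by (subst monom) simp
qed

lemma eq_0_if_agree_off_block:
  fixes F G :: "real poly"
  assumes deg: "degree F \<le> 2 * n + d" "degree G \<le> 2 * n + d"
    and agree: "\<And>e. e < n \<or> n + d < e \<Longrightarrow> coeff F e = coeff G e"
    and roots: "has_distinct_roots F {0<..<1} (n + d + 1)" "has_distinct_roots G {1<..} (n + d + 1)"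
  shows "F = 0 \<and> G = 0"
proof -
  define cs where "cs = [n..<n + d + 1]"
  define factor where "factor e = (\<Prod>c\<leftarrow>cs. real e - real c)" for e
  have factor_eq_0: "factor e = 0 \<longleftrightarrow> n \<le> e \<and> e \<le> n + d" for e
    by (auto simp: factor_def cs_def prod_list_zero_iff)
  define P where "P = foldr euler_op cs F"
  have coeff_P: "coeff P e = factor e * coeff F e" for e
    by (simp add: P_def factor_def coeff_foldr_euler_op)
  have G_eq: "foldr euler_op cs G = P"
  proof (rule poly_eqI)
    fix e
    show "coeff (foldr euler_op cs G) e = coeff P e"
      using agree[of e] factor_eq_0[of e]
      by (cases "e < n \<or> n + d < e") (auto simp: coeff_foldr_euler_op coeff_P factor_def[symmetric])
  qed
  have "length cs = d + 1" by (simp add: cs_def)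
  then have "has_distinct_roots P {0<..<1} n" "has_distinct_roots P {1<..} n"
    using has_distinct_roots_foldr_euler_op[of _ _ n cs] roots
    by (simp add: P_def, simp flip: G_eq)
  then have "has_distinct_roots P {0<..} (n + n)"
    by (rule has_distinct_roots_mono[OF has_distinct_roots_Un]) auto
  define S where "S = {..<n} \<union> {n + d<..2 * n + d}"
  have "card S = n + n" unfolding S_def by (subst card_Un_disjoint) auto
  moreover have "coeff P e = 0" if "e \<notin> S" for e
  proof (cases "e \<le> n + d")
    case True
    then show ?thesis using that factor_eq_0 by (simp add: coeff_P S_def)
  next
    case False
    then show ?thesis using that deg(1) by (simp add: coeff_P S_def coeff_eq_0)
  qed
  ultimately have "P = 0"
    using poly_eq_0_if_support_le_positive_roots[of S P] \<open>has_distinct_roots P {0<..} (n + n)\<close>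
    by (simp add: S_def)
  then have off_block: "coeff F e = 0" "coeff G e = 0" if "e < n \<or> n + d < e" for e
    using that coeff_P[of e] factor_eq_0[of e] agree[OF that] by auto
  have "has_distinct_roots F {0<..} (card {n..n + d})" "has_distinct_roots G {0<..} (card {n..n + d})"
    using roots by (auto elim!: has_distinct_roots_mono)
  then show ?thesis
    using off_block
    by (auto intro!: poly_eq_0_if_support_le_positive_roots[of "{n..n + d}"] simp: not_le)
qed

lemma poly_eqI_off_finite:
  fixes p q :: "'a::{idom, ring_char_0} poly"
  assumes "finite A" "\<And>x. x \<notin> A \<Longrightarrow> poly p x = poly q x"
  shows "p = q"
proof (rule ccontr)
  assume "p \<noteq> q"
  then have "finite {x. poly (p - q) x = 0}" by (intro poly_roots_finite) simp
  moreover have "- A \<subseteq> {x. poly (p - q) x = 0}" using assms(2) by auto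
  ultimately have "finite (UNIV :: 'a set)"
    using assms(1) by (metis finite_Un finite_subset Compl_partition)
  then show False using infinite_UNIV_char_0 by blast
qed

definition cayley :: "'a::field \<Rightarrow> 'a" where
  "cayley x = (1 - x) / (1 + x)"

lemma one_plus_cayley:
  fixes x :: "'a::field"
  assumes "x \<noteq> -1"
  shows "1 + cayley x = 2 / (1 + x)"
proof -
  have "1 + x \<noteq> 0" using assms by (metis add_eq_0_iff)
  then show ?thesis by (simp add: cayley_def field_simps)
qed

lemma cayley_neq_minus_one:
  fixes x :: "'a::field_char_0"
  assumes "x \<noteq> -1"
  shows "cayley x \<noteq> -1"
proof -
  have "1 + x \<noteq> 0" using assms by (metis add_eq_0_iff)
  then have "1 + cayley x \<noteq> 0" by (simp add: one_plus_cayley[OF assms])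
  then show ?thesis by (metis add_eq_0_iff)
qed

lemma cayley_cayley:
  fixes x :: "'a::field_char_0"
  assumes "x \<noteq> -1"
  shows "cayley (cayley x) = x"
proof -
  have "1 + x \<noteq> 0" using assms by (metis add_eq_0_iff)
  then have "1 - cayley x = 2 * x / (1 + x)" by (simp add: cayley_def field_simps)
  then show ?thesis
    using \<open>1 + x \<noteq> 0\<close> by (simp add: cayley_def[of "cayley x"] one_plus_cayley[OF assms])
qed

lemma inj_on_cayley: "inj_on (cayley :: 'a::field_char_0 \<Rightarrow> 'a) (- {-1})"
  by (rule inj_on_inverseI[of _ cayley]) (simp add: cayley_cayley)

lemma cayley_image_Ioo_0_1: "cayley ` {0<..<1} \<subseteq> {0<..<1::real}"
  by (auto simp: cayley_def pos_divide_less_eq)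

lemma cayley_image_Ioo_minus_1_0: "cayley ` {-1<..<0} \<subseteq> {1::real<..}"
  by (auto simp: cayley_def pos_less_divide_eq)

definition cayley_poly :: "nat \<Rightarrow> 'a::comm_ring_1 poly \<Rightarrow> 'a poly" where
  "cayley_poly N g = (\<Sum>j\<le>N. smult (coeff g j) ([:1, -1:] ^ j * [:1, 1:] ^ (N - j)))"

lemma poly_cayley_poly:
  fixes g :: "'a::field poly"
  assumes "degree g \<le> N" "y \<noteq> -1"
  shows "poly (cayley_poly N g) y = (1 + y) ^ N * poly g (cayley y)"
proof -
  have "1 + y \<noteq> 0" using assms(2) by (metis add_eq_0_iff)
  have "poly (cayley_poly N g) y = (\<Sum>j\<le>N. coeff g j * ((1 - y) ^ j * (1 + y) ^ (N - j)))"
    by (simp add: cayley_poly_def poly_sum)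
  also have "\<dots> = (\<Sum>j\<le>N. (1 + y) ^ N * (coeff g j * cayley y ^ j))"
  proof (rule sum.cong)
    fix j assume "j \<in> {..N}"
    then have "(1 + y) ^ N = (1 + y) ^ j * (1 + y) ^ (N - j)" by (simp flip: power_add)
    then show "coeff g j * ((1 - y) ^ j * (1 + y) ^ (N - j)) = (1 + y) ^ N * (coeff g j * cayley y ^ j)"
      using \<open>1 + y \<noteq> 0\<close> by (simp add: cayley_def field_simps)
  qed simp
  also have "\<dots> = (1 + y) ^ N * poly (\<Sum>j\<le>N. monom (coeff g j) j) (cayley y)"
    by (simp add: poly_sum poly_monom sum_distrib_left)
  also have "\<dots> = (1 + y) ^ N * poly g (cayley y)"
    by (simp add: poly_as_sum_of_monoms'[OF assms(1)])
  finally show ?thesis .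
qed

lemma degree_cayley_poly: "degree (cayley_poly N g) \<le> N"
  unfolding cayley_poly_def
proof (intro degree_sum_le order.trans[OF degree_smult_le] order.trans[OF degree_mult_le])
  fix j assume "j \<in> {..N}"
  have "degree ([:1, -1:] ^ j :: 'a poly) \<le> j" "degree ([:1, 1:] ^ (N - j) :: 'a poly) \<le> N - j"
    using degree_power_le[of "[:1, -1:] :: 'a poly" j] degree_power_le[of "[:1, 1:] :: 'a poly" "N - j"]
    by auto
  then show "degree ([:1, -1:] ^ j :: 'a poly) + degree ([:1, 1:] ^ (N - j) :: 'a poly) \<le> N"
    using \<open>j \<in> {..N}\<close> by simp
qed simp

lemma cayley_poly_add: "cayley_poly N (f + g) = cayley_poly N f + cayley_poly N g"
  by (simp add: cayley_poly_def smult_add_left sum.distrib)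

lemma cayley_poly_diff: "cayley_poly N (f - g) = cayley_poly N f - cayley_poly N g"
  by (simp add: cayley_poly_def smult_diff_left sum_subtractf)

lemma cayley_poly_mult:
  fixes f g :: "'a::field_char_0 poly"
  assumes "degree f \<le> a" "degree g \<le> b"
  shows "cayley_poly (a + b) (f * g) = cayley_poly a f * cayley_poly b g"
proof (rule poly_eqI_off_finite[of "{-1}"])
  fix y :: 'a assume "y \<notin> {-1}"
  have "degree (f * g) \<le> a + b" using assms by (meson add_mono degree_mult_le order_trans)
  then show "poly (cayley_poly (a + b) (f * g)) y = poly (cayley_poly a f * cayley_poly b g) y"
    using \<open>y \<notin> {-1}\<close> by (simp add: poly_cayley_poly assms power_add)
qed simp

lemma cayley_poly_power:
  fixes f :: "'a::field_char_0 poly"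
  assumes "degree f \<le> a"
  shows "cayley_poly (a * n) (f ^ n) = cayley_poly a f ^ n"
proof (induction n)
  case 0
  show ?case by (simp add: cayley_poly_def)
next
  case (Suc n)
  have "degree (f ^ n) \<le> a * n"
    using degree_power_le[of f n] assms by (metis mult_le_mono1 order_trans)
  with cayley_poly_mult[OF assms] show ?case
    using Suc.IH by simp
qed

lemma cayley_poly_eq_0_iff:
  fixes g :: "'a::field_char_0 poly"
  assumes "degree g \<le> N"
  shows "cayley_poly N g = 0 \<longleftrightarrow> g = 0"
proof
  assume "cayley_poly N g = 0"
  show "g = 0"
  proof (rule poly_eqI_off_finite[of "{-1}"])
    fix x :: 'a assume "x \<notin> {-1}"
    then have "cayley x \<noteq> -1" "1 + cayley x \<noteq> 0"
      using cayley_neq_minus_one by (auto simp: add_eq_0_iff)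
    then show "poly g x = poly 0 x"
      using poly_cayley_poly[OF assms, of "cayley x"] \<open>cayley_poly N g = 0\<close> \<open>x \<notin> {-1}\<close>
      by (simp add: cayley_cayley)
  qed simp
qed (simp add: cayley_poly_def)

lemma has_distinct_roots_cayley_poly:
  fixes g :: "'a::field_char_0 poly"
  assumes "degree g \<le> N" "-1 \<notin> I" "has_distinct_roots g I r"
  shows "has_distinct_roots (cayley_poly N g) (cayley ` I) r"
proof -
  obtain R where R: "finite R" "card R = r" "R \<subseteq> I" "\<forall>x\<in>R. poly g x = 0"
    using assms(3) unfolding has_distinct_roots_def by blast
  have "inj_on cayley R"
    using inj_on_subset[OF inj_on_cayley] R(3) assms(2) by blast
  moreover have "poly (cayley_poly N g) (cayley x) = 0" if "x \<in> R" for x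
  proof -
    have "x \<noteq> -1" using that R(3) assms(2) by blast
    then have "poly (cayley_poly N g) (cayley x) = (1 + cayley x) ^ N * poly g x"
      by (simp add: poly_cayley_poly[OF assms(1)] cayley_neq_minus_one cayley_cayley)
    then show ?thesis using that R(4) by simp
  qed
  ultimately show ?thesis
    using has_distinct_roots_image[OF R(1), of cayley] R(2,3) by blast
qed

lemma cayley_poly_one_minus_square: "cayley_poly 2 [:1, 0, -1:] = (monom 4 1 :: 'a::field_char_0 poly)"
proof (rule poly_eqI_off_finite[of "{-1}"])
  fix y :: 'a assume "y \<notin> {-1}"
  then have "1 + y \<noteq> 0" by (auto simp: add_eq_0_iff)
  have "poly (cayley_poly 2 [:1, 0, -1:]) y = (1 + y)\<^sup>2 * (1 - (cayley y)\<^sup>2)"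
    using \<open>y \<notin> {-1}\<close> by (simp add: poly_cayley_poly power2_eq_square)
  also have "\<dots> = (1 + y)\<^sup>2 - (1 - y)\<^sup>2"
    using \<open>1 + y \<noteq> 0\<close> by (simp add: cayley_def power_divide right_diff_distrib)
  also have "\<dots> = poly (monom 4 1) y"
    by (simp add: poly_monom power2_eq_square algebra_simps)
  finally show "poly (cayley_poly 2 [:1, 0, -1:]) y = poly (monom 4 1) y" .
qed simp

lemma coeff_cayley_poly_one_minus_square_power_mult:
  fixes q :: "'a::field_char_0 poly"
  assumes "degree q \<le> d" "e < n \<or> n + d < e"
  shows "coeff (cayley_poly (2 * n + d) ([:1, 0, -1:] ^ n * q)) e = 0"
proof -
  have "degree ([:1, 0, -1:] :: 'a poly) \<le> 2" by simp
  then have "cayley_poly (2 * n) ([:1, 0, -1:] ^ n) = (monom (4 ^ n) n :: 'a poly)"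
    by (simp add: cayley_poly_power cayley_poly_one_minus_square monom_power)
  moreover have "degree ([:1, 0, -1:] ^ n :: 'a poly) \<le> 2 * n"
    using degree_power_le[of "[:1, 0, -1:] :: 'a poly" n] by simp
  ultimately have "cayley_poly (2 * n + d) ([:1, 0, -1:] ^ n * q) = monom (4 ^ n) n * cayley_poly d q"
    using cayley_poly_mult assms(1) by metis
  then show ?thesis
    using assms(2) degree_cayley_poly[of d q] by (auto simp: coeff_monom_mult coeff_eq_0)
qed

lemma eq_0_if_cayley_polys_agree_off_block:
  fixes f g :: "real poly"
  assumes deg: "degree f \<le> 2 * n + d" "degree g \<le> 2 * n + d"
    and agree: "\<And>e. e < n \<or> n + d < e \<Longrightarrow>
      coeff (cayley_poly (2 * n + d) f) e = coeff (cayley_poly (2 * n + d) g) e"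
    and roots: "has_distinct_roots f {0<..<1} (n + d + 1)" "has_distinct_roots g {-1<..<0} (n + d + 1)"
  shows "f = 0 \<and> g = 0"
proof -
  have "has_distinct_roots (cayley_poly (2 * n + d) f) {0<..<1} (n + d + 1)"
    using has_distinct_roots_cayley_poly[OF deg(1) _ roots(1)] cayley_image_Ioo_0_1
    by (auto elim: has_distinct_roots_mono)
  moreover have "has_distinct_roots (cayley_poly (2 * n + d) g) {1<..} (n + d + 1)"
    using has_distinct_roots_cayley_poly[OF deg(2) _ roots(2)] cayley_image_Ioo_minus_1_0
    by (auto elim: has_distinct_roots_mono)
  ultimately show ?thesis
    using eq_0_if_agree_off_block[OF degree_cayley_poly degree_cayley_poly agree]
    by (simp add: cayley_poly_eq_0_iff deg)
qed

lemma has_distinct_roots_add_diff_if_even_odd: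
  fixes p q w :: "real poly"
  assumes "finite A" "inj_on t A" "\<And>i. i \<in> A \<Longrightarrow> 0 < t i \<and> t i < 1"
    and "\<And>i. i \<in> A \<Longrightarrow> poly (poly_even p) (t i) + poly (poly_odd q) (t i) * poly w (t i) = 0"
    and "\<And>i. i \<in> A \<Longrightarrow> poly (poly_odd p) (t i) + poly (poly_even q) (t i) * poly w (t i) = 0"
    and "\<And>x. poly w (- x) = poly w x"
  shows "has_distinct_roots (p + w * q) {0<..<1} (card A)"
    and "has_distinct_roots (p - w * q) {-1<..<0} (card A)"
proof -
  have roots: "poly (p + w * q) (t i) = 0" "poly (p - w * q) (- t i) = 0" if "i \<in> A" for i
    using poly_eq_0_if_even_odd_eq_0[OF assms(4,5)[OF that]] assms(6)[of "t i"]
    by (simp_all add: algebra_simps)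
  show "has_distinct_roots (p + w * q) {0<..<1} (card A)"
    using assms(3) roots(1) by (intro has_distinct_roots_image[OF assms(1,2)]) auto
  have "inj_on (\<lambda>i. - t i) A"
    using comp_inj_on[OF assms(2) inj_uminus] unfolding comp_def .
  then show "has_distinct_roots (p - w * q) {-1<..<0} (card A)"
    using assms(3) roots(2) by (intro has_distinct_roots_image[OF assms(1)]) auto
qed

theorem proposition2p5:
  fixes m k :: nat and p q :: "real poly" and t :: "nat \<Rightarrow> real"
  assumes "1 \<le> k" and "k \<le> m"
    and "degree p \<le> 2 * m - k - 1"
    and "degree q \<le> k - 1"
    and "inj_on t {1..m}"
    and "\<And>i. i \<in> {1..m} \<Longrightarrow> 0 < t i \<and> t i < 1"
    and "\<And>i. i \<in> {1..m} \<Longrightarrow>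
           poly (poly_even p) (t i) + poly (poly_odd q) (t i) * (1 - (t i)\<^sup>2) ^ (m - k) = 0"
    and "\<And>i. i \<in> {1..m} \<Longrightarrow>
           poly (poly_odd p) (t i) + poly (poly_even q) (t i) * (1 - (t i)\<^sup>2) ^ (m - k) = 0"
  shows "p = 0 \<and> q = 0"
proof -
  define n d where "n = m - k" and "d = k - 1"
  define w :: "real poly" where "w = [:1, 0, -1:] ^ n"
  have card: "card {1..m} = n + d + 1" and deg_p: "degree p \<le> 2 * n + d" and deg_q: "degree q \<le> d"
    using assms(1-4) by (simp_all add: n_def d_def)
  have poly_w: "poly w x = (1 - x\<^sup>2) ^ n" for x
    by (simp add: w_def power2_eq_square)
  have "degree (w * q) \<le> 2 * n + d"
    using degree_mult_le[of w q] degree_power_le[of "[:1, 0, -1::real:]" n] deg_q by (simp add: w_def)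
  then have deg: "degree (p + w * q) \<le> 2 * n + d" "degree (p - w * q) \<le> 2 * n + d"
    using deg_p by (meson degree_add_le degree_diff_le)+
  have "has_distinct_roots (p + w * q) {0<..<1} (n + d + 1)"
    and "has_distinct_roots (p - w * q) {-1<..<0} (n + d + 1)"
    unfolding card[symmetric] using assms(7,8)
    by (intro has_distinct_roots_add_diff_if_even_odd[OF finite_atLeastAtMost assms(5,6)];
        simp add: poly_w n_def)+
  moreover have "coeff (cayley_poly (2 * n + d) (p + w * q)) e = coeff (cayley_poly (2 * n + d) (p - w * q)) e"
    if "e < n \<or> n + d < e" for e
    using coeff_cayley_poly_one_minus_square_power_mult[OF deg_q that]
    by (simp add: cayley_poly_add cayley_poly_diff w_def)
  ultimately have sum_diff: "p + w * q = 0 \<and> p - w * q = 0"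
    using eq_0_if_cayley_polys_agree_off_block[OF deg] by blast
  then have "w * q = 0" by algebra
  moreover have "w \<noteq> 0" by (simp add: w_def)
  ultimately show ?thesis using sum_diff by simp
qed

end
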